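(* Let $f:2^{\mathcal{E}_x}\to\mathbb{R}_{\ge 0}$ be normalized, monotone and submodular, and consider $(\mathrm{P}_1)$ under the constraint TU$_b$ (i.e., maximize $f(\mathcal{E})$ over $\mathcal{E}\subseteq\mathcal{E}_x$ with $|\mathcal{E}|\le k$ and some vertex cover $\mathcal{V}$ of $\mathcal{E}$ with $|\mathcal{V}|\le b$), with optimal value $\mathrm{OPT}_1$. Then the algorithm Edge-Greedy (described in the context) returns a feasible solution $\mathcal{E}_{\mathrm{grd}}$ of this problem with $f(\mathcal{E}_{\mathrm{grd}})\ge\alpha_e(b,k)\cdot\mathrm{OPT}_1$, where $\alpha_e(b,k)=1-\exp\big(-\min\{1,b/k\}\big)$.
   Context: $\mathcal{G}=(\mathcal{V}_x,\mathcal{E}_x)$ is a finite simple undirected graph; $b,k\ge1$ are integers. For $\mathcal{V}\subseteq\mathcal{V}_x$, $\mathsf{edges}(\mathcal{V})$ is the set of edges incident to at least one vertex of $\mathcal{V}$. A set function $h$ is normalized if $h(\varnothing)=0$, monotone if $h(A)\le h(B)$ for $A\subseteq B$, submodular if $h(A)+h(B)\ge h(A\cup B)+h(A\cap B)$. Edge-Greedy: Phase I: start with $\mathcal{E}_{\mathrm{grd}}=\varnothing$; for $\min(b,k)$ iterations (or until no edges remain), add an edge $e^\star\in\arg\max_{e\in\mathcal{E}_x\setminus\mathcal{E}_{\mathrm{grd}}}f(\mathcal{E}_{\mathrm{grd}}\cup\{e\})$. Then let $\mathcal{V}_{\mathrm{grd}}$ be a vertex cover of $\mathcal{E}_{\mathrm{grd}}$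 obtained by choosing one endpoint of each selected edge. Phase II (only if $k>b$): let $\mathcal{E}_{\mathrm{free}}=\mathsf{edges}(\mathcal{V}_{\mathrm{grd}})\setminus\mathcal{E}_{\mathrm{grd}}$; for $\min(|\mathcal{E}_{\mathrm{free}}|,k-b)$ iterations, add an edge $e^\star\in\arg\max_{e\in\mathcal{E}_{\mathrm{free}}\setminus\mathcal{E}_{\mathrm{grd}}}f(\mathcal{E}_{\mathrm{grd}}\cup\{e\})$. Return $(\mathcal{V}_{\mathrm{grd}},\mathcal{E}_{\mathrm{grd}})$. *)

theory Defs
  imports Complex_Main
begin

definition simple_graph :: "'v set \<Rightarrow> 'v set set \<Rightarrow> bool" where
  "simple_graph Vxs Exs \<longleftrightarrow> finite Vxs \<and>
     (\<forall>e\<in>Exs. \<exists>u w. e = {u, w} \<and> u \<noteq> w \<and> u \<in> Vxs \<and> w \<in> Vxs)"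

definition edges_of :: "'v set set \<Rightarrow> 'v set \<Rightarrow> 'v set set" where
  "edges_of Exs V = {e \<in> Exs. e \<inter> V \<noteq> {}}"

definition is_vertex_cover :: "'v set \<Rightarrow> 'v set \<Rightarrow> 'v set set \<Rightarrow> bool" where
  "is_vertex_cover Vxs V E \<longleftrightarrow> V \<subseteq> Vxs \<and> (\<forall>e\<in>E. e \<inter> V \<noteq> {})"

definition normalized :: "('a set \<Rightarrow> real) \<Rightarrow> bool" where
  "normalized h \<longleftrightarrow> h {} = 0"

definition monotone_on_sets :: "'a set \<Rightarrow> ('a set \<Rightarrow> real) \<Rightarrow> bool" where
  "monotone_on_sets X h \<longleftrightarrow> (\<forall>A B. A \<subseteq> B \<and> B \<subseteq> X \<longrightarrow> h A \<le> h B)"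

definition submodular_on :: "'a set \<Rightarrow> ('a set \<Rightarrow> real) \<Rightarrow> bool" where
  "submodular_on X h \<longleftrightarrow> (\<forall>A B. A \<subseteq> X \<and> B \<subseteq> X \<longrightarrow> h A + h B \<ge> h (A \<union> B) + h (A \<inter> B))"

definition TU_feasible :: "'v set \<Rightarrow> 'v set set \<Rightarrow> nat \<Rightarrow> nat \<Rightarrow> 'v set set \<Rightarrow> bool" where
  "TU_feasible Vxs Exs b k E \<longleftrightarrow> E \<subseteq> Exs \<and> card E \<le> k \<and>
     (\<exists>V. is_vertex_cover Vxs V E \<and> card V \<le> b)"

definition OPT1 :: "'v set \<Rightarrow> 'v set set \<Rightarrow> nat \<Rightarrow> nat \<Rightarrow> ('v set set \<Rightarrow> real) \<Rightarrow> real" where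
  "OPT1 Vxs Exs b k f = Max (f ` {E. TU_feasible Vxs Exs b k E})"

text \<open>greedy_run f C S es S': starting from the current set S, the greedy steps
  add, in order, the elements of es; each added element maximizes f(S \<union> {e})
  among the candidates C - S (arbitrary tie-breaking); S' is the final set.\<close>
inductive greedy_run :: "('a set \<Rightarrow> real) \<Rightarrow> 'a set \<Rightarrow> 'a set \<Rightarrow> 'a list \<Rightarrow> 'a set \<Rightarrow> bool"
  for f C where
  Nil: "greedy_run f C S [] S"
| Cons: "\<lbrakk> e \<in> C - S; \<forall>e'\<in>C - S. f (insert e' S) \<le> f (insert e S);
           greedy_run f C (insert e S) es S' \<rbrakk> \<Longrightarrow> greedy_run f C S (e # es) S'"

text \<open>Edge-Greedy: (Vgrd, Egrd) is a possible output (for some tie-breaking and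
  some choice of endpoints).\<close>
definition edge_greedy_output ::
  "'v set set \<Rightarrow> ('v set set \<Rightarrow> real) \<Rightarrow> nat \<Rightarrow> nat \<Rightarrow> 'v set \<Rightarrow> 'v set set \<Rightarrow> bool" where
  "edge_greedy_output Exs f b k Vgrd Egrd \<longleftrightarrow>
     (\<exists>es1 E1 g.
        greedy_run f Exs {} es1 E1 \<and> length es1 = min (min b k) (card Exs) \<and>
        (\<forall>e\<in>E1. g e \<in> e) \<and> Vgrd = g ` E1 \<and>
        (if k > b then
           (let Efree = edges_of Exs Vgrd - E1 in
              \<exists>es2. greedy_run f Efree E1 es2 Egrd \<and> length es2 = min (card Efree) (k - b))
         else Egrd = E1))"

end

theory Submission
  imports Defs
begin

text \<open>Phase I is the classical greedy algorithm run for \<open>min b k\<close> steps: against an optimum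
  \<open>O\<close> with \<open>|O| \<le> k\<close>, submodularity makes each greedy step close at least a \<open>1/k\<close> fraction
  of the remaining gap \<open>f O - f S\<close>, so after \<open>min b k\<close> steps the gap has shrunk by
  \<open>(1 - 1/k)^min b k \<le> exp (- min 1 (b/k))\<close>. Phase II only adds edges, which by monotonicity
  does not decrease \<open>f\<close>. Feasibility holds because the chosen endpoints of the \<open>min b k\<close>
  Phase I edges form a cover of size at most \<open>b\<close>, and Phase II only adds edges incident to
  that cover, at most \<open>k - b\<close> of them.\<close>

lemma greedy_run_result:
  assumes "greedy_run f C S es S'"
  shows "S' = S \<union> set es" and "distinct es" and "set es \<subseteq> C" and "set es \<inter> S = {}"
  using assms by (induction rule: greedy_run.induct) auto

lemma submodular_union_le_marginal_sum:
  assumes mono: "monotone_on_sets X f" and sub: "submodular_on X f"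
    and S: "S \<subseteq> X" and fin: "finite T" and T: "T \<subseteq> X"
  shows "f (S \<union> T) \<le> f S + (\<Sum>y\<in>T. f (insert y S) - f S)"
  using fin T
proof (induction T rule: finite_induct)
  case empty then show ?case by simp
next
  case (insert x T)
  let ?A = "S \<union> T" and ?B = "insert x S"
  have "f ?A + f ?B \<ge> f (?A \<union> ?B) + f (?A \<inter> ?B)"
    using sub[unfolded submodular_on_def, rule_format, of ?A ?B] insert.prems S by auto
  moreover have "f S \<le> f (?A \<inter> ?B)"
    using mono[unfolded monotone_on_sets_def, rule_format, of S "?A \<inter> ?B"] insert.prems S by auto
  moreover have "?A \<union> ?B = S \<union> insert x T" by auto
  ultimately have "f (S \<union> insert x T) \<le> f (S \<union> T) + (f (insert x S) - f S)" by simp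
  with insert show ?case by simp
qed

lemma greedy_step_closes_gap:
  assumes mono: "monotone_on_sets X f" and sub: "submodular_on X f"
    and S: "S \<subseteq> X" and e: "e \<in> X - S"
    and greedy: "\<forall>e'\<in>X - S. f (insert e' S) \<le> f (insert e S)"
    and Opt: "finite Opt" "Opt \<subseteq> X" "card Opt \<le> k"
  shows "f Opt - f S \<le> real k * (f (insert e S) - f S)"
proof -
  let ?D = "f (insert e S) - f S"
  have D_nonneg: "0 \<le> ?D"
    using mono[unfolded monotone_on_sets_def, rule_format, of S "insert e S"] S e by auto
  have "f Opt \<le> f (S \<union> Opt)"
    using mono S Opt unfolding monotone_on_sets_def by auto
  also have "\<dots> \<le> f S + (\<Sum>y\<in>Opt. f (insert y S) - f S)"
    by (rule submodular_union_le_marginal_sum[OF mono sub S Opt(1,2)])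
  also have "(\<Sum>y\<in>Opt. f (insert y S) - f S) \<le> (\<Sum>y\<in>Opt. ?D)"
  proof (rule sum_mono)
    fix y assume "y \<in> Opt"
    then show "f (insert y S) - f S \<le> ?D"
      using greedy Opt(2) D_nonneg by (cases "y \<in> S") (auto simp: insert_absorb)
  qed
  also have "(\<Sum>y\<in>Opt. ?D) \<le> real k * ?D"
    using mult_right_mono[OF _ D_nonneg, of "real (card Opt)" "real k"] Opt(3) by simp
  finally show ?thesis by simp
qed

lemma greedy_run_gap_bound:
  assumes run: "greedy_run f X S es S'"
    and mono: "monotone_on_sets X f" and sub: "submodular_on X f" and S: "S \<subseteq> X"
    and Opt: "finite Opt" "Opt \<subseteq> X" "card Opt \<le> k" and k: "k \<ge> 1"
  shows "f Opt - f S' \<le> (1 - 1 / real k) ^ length es * (f Opt - f S)"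
  using run S
proof (induction rule: greedy_run.induct)
  case (Nil S) then show ?case by simp
next
  case (Cons e S es S')
  have "f Opt - f S \<le> real k * (f (insert e S) - f S)"
    using greedy_step_closes_gap[OF mono sub Cons.prems Cons.hyps(1,2) Opt] .
  then have step: "f Opt - f (insert e S) \<le> (1 - 1 / real k) * (f Opt - f S)"
    using k by (simp add: field_simps)
  have "f Opt - f S' \<le> (1 - 1 / real k) ^ length es * (f Opt - f (insert e S))"
    using Cons.IH Cons.prems Cons.hyps(1) by auto
  also have "\<dots> \<le> (1 - 1 / real k) ^ length es * ((1 - 1 / real k) * (f Opt - f S))"
    using mult_left_mono[OF step] k by simp
  finally show ?case by (simp add: ac_simps)
qed

lemma one_minus_inverse_power_le_exp:
  assumes "k \<ge> (1::nat)"
  shows "(1 - 1 / real k) ^ m \<le> exp (- (real m / real k))"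
proof -
  have "(1 - 1 / real k) ^ m \<le> exp (- (1 / real k)) ^ m"
    using power_mono[OF exp_ge_add_one_self[of "- (1 / real k)"]] assms by simp
  also have "\<dots> = exp (- (real m / real k))"
    by (simp flip: exp_of_nat_mult)
  finally show ?thesis .
qed

text \<open>If the run stops before \<open>m\<close> steps it has picked all of \<open>X\<close>, which beats
  every competitor by monotonicity.\<close>

lemma greedy_run_approximation:
  assumes run: "greedy_run f X {} es S'" and len: "length es = min m (card X)"
    and mono: "monotone_on_sets X f" and sub: "submodular_on X f"
    and f0: "f {} = 0" and finX: "finite X"
    and Opt: "Opt \<subseteq> X" "card Opt \<le> k" "f Opt \<ge> 0" and k: "k \<ge> 1"
  shows "f S' \<ge> (1 - exp (- (real m / real k))) * f Opt"
proof (cases "card X < m")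
  case True
  have "S' = set es" "distinct es" "set es \<subseteq> X"
    using greedy_run_result[OF run] by auto
  then have "S' = X"
    using True len card_subset_eq[OF finX] by (simp add: distinct_card)
  then have "f Opt \<le> f S'"
    using mono Opt unfolding monotone_on_sets_def by auto
  moreover have "(1 - exp (- (real m / real k))) * f Opt \<le> f Opt"
    using Opt(3) by (simp add: mult_left_le_one_le)
  ultimately show ?thesis by linarith
next
  case False
  then have len_m: "length es = m" using len by simp
  have "f Opt - f S' \<le> (1 - 1 / real k) ^ m * f Opt"
    using greedy_run_gap_bound[OF run mono sub _ finite_subset[OF Opt(1) finX] Opt(1,2) k] len_m f0
    by simp
  also have "\<dots> \<le> exp (- (real m / real k)) * f Opt"
    using mult_right_mono[OF one_minus_inverse_power_le_exp[OF k] Opt(3)] .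
  finally show ?thesis by (simp add: algebra_simps)
qed

lemma simple_graph_edges:
  assumes "simple_graph Vxs Exs"
  shows "finite Exs" and "\<And>e. e \<in> Exs \<Longrightarrow> e \<subseteq> Vxs"
proof -
  show edge_subset: "\<And>e. e \<in> Exs \<Longrightarrow> e \<subseteq> Vxs"
    using assms unfolding simple_graph_def by auto
  have "finite Vxs" using assms unfolding simple_graph_def by auto
  then show "finite Exs"
    using finite_subset[of Exs "Pow Vxs"] edge_subset by auto
qed

lemma OPT1_attained:
  assumes "finite Exs"
  obtains Opt where "TU_feasible Vxs Exs b k Opt" and "f Opt = OPT1 Vxs Exs b k f"
proof -
  let ?F = "{E. TU_feasible Vxs Exs b k E}"
  have "finite ?F"
    using finite_subset[of ?F "Pow Exs"] assms by (auto simp: TU_feasible_def)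
  moreover have "{} \<in> ?F"
    by (auto simp: TU_feasible_def is_vertex_cover_def)
  ultimately have "OPT1 Vxs Exs b k f \<in> f ` ?F"
    unfolding OPT1_def by (intro Max_in) auto
  then show ?thesis using that by auto
qed

lemma edge_greedy_output_phase1:
  assumes graph: "simple_graph Vxs Exs" and out: "edge_greedy_output Exs f b k Vgrd Egrd"
  obtains es1 E1 where "greedy_run f Exs {} es1 E1" "length es1 = min (min b k) (card Exs)"
    and "E1 \<subseteq> Egrd" and "TU_feasible Vxs Exs b k Egrd"
    and "is_vertex_cover Vxs Vgrd Egrd" and "card Vgrd \<le> b"
proof -
  obtain es1 E1 g where run1: "greedy_run f Exs {} es1 E1"
    and len1: "length es1 = min (min b k) (card Exs)"
    and g: "\<forall>e\<in>E1. g e \<in> e" and Vg: "Vgrd = g ` E1"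
    and phase2: "if k > b then
           (let Efree = edges_of Exs Vgrd - E1 in
              \<exists>es2. greedy_run f Efree E1 es2 Egrd \<and> length es2 = min (card Efree) (k - b))
         else Egrd = E1"
    using out unfolding edge_greedy_output_def by blast
  have E1: "E1 = set es1" "E1 \<subseteq> Exs" and card_E1: "card E1 = min (min b k) (card Exs)"
    using greedy_run_result[OF run1] len1 by (auto simp: distinct_card)
  have card_Vgrd: "card Vgrd \<le> b"
    using card_image_le[of E1 g] E1 Vg card_E1 by simp
  have Vgrd_Vxs: "Vgrd \<subseteq> Vxs"
    using Vg g E1 simple_graph_edges(2)[OF graph] by blast
  have E1_covered: "\<forall>e\<in>E1. e \<inter> Vgrd \<noteq> {}" using g Vg by blast
  have "E1 \<subseteq> Egrd \<and> Egrd \<subseteq> Exs \<and> card Egrd \<le> k \<and> (\<forall>e\<in>Egrd. e \<inter> Vgrd \<noteq> {})"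
  proof (cases "k > b")
    case True
    define Efree where "Efree = edges_of Exs Vgrd - E1"
    obtain es2 where run2: "greedy_run f Efree E1 es2 Egrd"
      and len2: "length es2 = min (card Efree) (k - b)"
      using phase2 True unfolding Efree_def Let_def by auto
    have Egrd: "Egrd = E1 \<union> set es2" "set es2 \<subseteq> Efree"
      using greedy_run_result[OF run2] by auto
    have "card Egrd \<le> card E1 + card (set es2)" using Egrd card_Un_le by metis
    also have "card (set es2) \<le> k - b" using card_length[of es2] len2 by linarith
    finally have "card Egrd \<le> k" using card_E1 True by linarith
    moreover have "Efree \<subseteq> Exs" "\<forall>e\<in>Efree. e \<inter> Vgrd \<noteq> {}"
      unfolding Efree_def edges_of_def by auto
    ultimately show ?thesis using Egrd E1 E1_covered by blast
  next
    case False
    then show ?thesis using phase2 E1 E1_covered card_E1 by simp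
  qed
  then show ?thesis
    using that[OF run1 len1] Vgrd_Vxs card_Vgrd
    unfolding TU_feasible_def is_vertex_cover_def by blast
qed

theorem lemma3:
  fixes Vxs :: "'v set" and Exs :: "'v set set" and b k :: nat
    and f :: "'v set set \<Rightarrow> real" and Vgrd :: "'v set" and Egrd :: "'v set set"
  assumes "simple_graph Vxs Exs" and "b \<ge> 1" and "k \<ge> 1"
    and "\<forall>E\<subseteq>Exs. f E \<ge> 0"
    and "normalized f" and "monotone_on_sets Exs f" and "submodular_on Exs f"
    and "edge_greedy_output Exs f b k Vgrd Egrd"
  shows "TU_feasible Vxs Exs b k Egrd \<and> is_vertex_cover Vxs Vgrd Egrd \<and> card Vgrd \<le> b \<and>
         f Egrd \<ge> (1 - exp (- min 1 (real b / real k))) * OPT1 Vxs Exs b k f"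
proof -
  have finX: "finite Exs" using simple_graph_edges(1)[OF assms(1)] .
  obtain es1 E1 where run1: "greedy_run f Exs {} es1 E1"
    and len1: "length es1 = min (min b k) (card Exs)" and "E1 \<subseteq> Egrd"
    and feasible: "TU_feasible Vxs Exs b k Egrd" "is_vertex_cover Vxs Vgrd Egrd" "card Vgrd \<le> b"
    using edge_greedy_output_phase1[OF assms(1,8)] .
  obtain Opt where Opt: "TU_feasible Vxs Exs b k Opt" and Opt_opt: "f Opt = OPT1 Vxs Exs b k f"
    using OPT1_attained[OF finX] .
  have "Opt \<subseteq> Exs" "card Opt \<le> k" using Opt unfolding TU_feasible_def by auto
  then have "f E1 \<ge> (1 - exp (- (real (min b k) / real k))) * f Opt"
    using greedy_run_approximation[OF run1 len1 assms(6,7) _ finX] assms(3-5)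
    by (simp add: normalized_def)
  also have "real (min b k) / real k = min 1 (real b / real k)"
    using assms(3) by (cases "b \<le> k") (auto simp: min_def divide_simps)
  also have "f E1 \<le> f Egrd"
    using assms(6) \<open>E1 \<subseteq> Egrd\<close> feasible(1) unfolding monotone_on_sets_def TU_feasible_def by auto
  finally show ?thesis using feasible Opt_opt by simp
qed

end
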